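(* Let $G$ be a finite graph and $D$ a divisor on $G$. Then $\bigoplus_{m=0}^\infty R(G,mD)$ is finitely generated as a graded semi-ring over ${\mathbb{Z}}^{\mathrm{trop}}$.
   Context: A finite graph $G$ is connected, loops and multiple edges allowed. A divisor is $D=\sum_{x\in V(G)}D(x)[x]$, $D(x)\in{\mathbb{Z}}$; effective if all $D(x)\ge0$. A rational function is $f:V(G)\to{\mathbb{Z}}$; $\mathrm{ord}_x(f)=\sum_{e=\overline{xy}\in E(G)}(f(y)-f(x))$, $\mathrm{div}(f)=\sum_x\mathrm{ord}_x(f)[x]$. $R(G,D)=\{f: D+\mathrm{div}(f)\ge0\}$. The direct sum $\bigoplus_m R(G,mD)$ is a graded semi-ring over ${\mathbb{Z}}^{\mathrm{trop}}=({\mathbb{Z}},\max,+)$ with sum $\max$ in each degree, action $c\odot f=c+f$, product $f\odot g=f+g$ (degrees add). Finitely generated means there are finitely many homogeneous elements such that every homogeneous element is a finite tropical sum of ${\mathbb{Z}}^{\mathrm{trop}}$-multiples of tropical products of them. *)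

theory Defs
  imports "HOL-Library.Multiset"
begin

text \<open>A finite multigraph (loops and multiple edges allowed) on the finite vertex type 'v
  is given by a symmetric edge-multiplicity function w: w x y is the number of edges
  between x and y (w x x the number of loops at x).\<close>

definition symmetric_graph :: "('v \<Rightarrow> 'v \<Rightarrow> nat) \<Rightarrow> bool" where
  "symmetric_graph w \<longleftrightarrow> (\<forall>x y. w x y = w y x)"

definition connected_graph :: "('v \<Rightarrow> 'v \<Rightarrow> nat) \<Rightarrow> bool" where
  "connected_graph w \<longleftrightarrow> (\<forall>x y. (x, y) \<in> {(a, b). w a b > 0}\<^sup>*)"

definition ord_at :: "('v::finite \<Rightarrow> 'v \<Rightarrow> nat) \<Rightarrow> ('v \<Rightarrow> int) \<Rightarrow> 'v \<Rightarrow> int" where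
  "ord_at w f x = (\<Sum>y\<in>UNIV. int (w x y) * (f y - f x))"

definition Rspace :: "('v::finite \<Rightarrow> 'v \<Rightarrow> nat) \<Rightarrow> ('v \<Rightarrow> int) \<Rightarrow> ('v \<Rightarrow> int) set" where
  "Rspace w D = {f. \<forall>x. D x + ord_at w f x \<ge> 0}"

text \<open>Homogeneous elements of the graded semiring: pairs (degree m, f) with f in R(G, mD).\<close>
definition homog :: "('v::finite \<Rightarrow> 'v \<Rightarrow> nat) \<Rightarrow> ('v \<Rightarrow> int) \<Rightarrow> (nat \<times> ('v \<Rightarrow> int)) set" where
  "homog w D = {(m, f). f \<in> Rspace w (\<lambda>x. int m * D x)}"

text \<open>Tropical product of a finite multiset of homogeneous elements: degrees add, functions add.
  The empty product is the unit (degree 0, constant 0).\<close>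
definition trop_prod_deg :: "(nat \<times> ('v \<Rightarrow> int)) multiset \<Rightarrow> nat" where
  "trop_prod_deg M = (\<Sum>g\<in>#M. fst g)"

definition trop_prod_fun :: "(nat \<times> ('v \<Rightarrow> int)) multiset \<Rightarrow> 'v \<Rightarrow> int" where
  "trop_prod_fun M = (\<lambda>x. \<Sum>g\<in>#M. snd g x)"

text \<open>Finitely generated as a graded semiring over Z^trop: finitely many homogeneous generators
  such that every homogeneous element is a finite (nonempty) tropical sum (pointwise max) of
  tropical scalar multiples c \<odot> (product of generators) of the same degree.\<close>
definition fin_gen_graded :: "('v::finite \<Rightarrow> 'v \<Rightarrow> nat) \<Rightarrow> ('v \<Rightarrow> int) \<Rightarrow> bool" where
  "fin_gen_graded w D \<longleftrightarrow>
     (\<exists>S. finite S \<and> S \<subseteq> homog w D \<and>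
        (\<forall>m f. (m, f) \<in> homog w D \<longrightarrow>
           (\<exists>T :: (int \<times> (nat \<times> ('v \<Rightarrow> int)) multiset) list.
               T \<noteq> [] \<and>
               (\<forall>(c, M)\<in>set T. set_mset M \<subseteq> S \<and> trop_prod_deg M = m) \<and>
               (\<forall>x. f x = Max ((\<lambda>(c, M). c + trop_prod_fun M x) ` set T)))))"

end

theory Submission
  imports Defs Complex_Main "HOL-Library.Function_Algebras" "HOL-Library.Product_Plus"
begin

text \<open>Normalise a homogeneous element (m, f) by f(v0) = 0 for a fixed vertex v0; the constant
  f(v0) becomes the tropical scalar. The normalised elements form an additive monoid P, and
  (m, f) \<mapsto> (m, mD + div f) embeds P into \<nat>^(V+1): the map is injective because on a connected
  graph only constant functions have zero divisor, and componentwise x \<le> y forces y - x \<in> P.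
  Hence the indecomposable elements of P form an antichain of \<nat>^(V+1), which is finite by Dickson's
  lemma, and every element of P is a sum of indecomposables. So every homogeneous element is
  a single tropical monomial c \<odot> g_1 \<odot> ... \<odot> g_k in these finitely many generators.\<close>

section \<open>Dickson's lemma\<close>

lemma nat_seq_incseq_subseq:
  fixes s :: "nat \<Rightarrow> nat"
  shows "\<exists>r. strict_mono r \<and> incseq (s \<circ> r)"
proof -
  obtain r where r: "strict_mono r" and mono: "monoseq (\<lambda>n. s (r n))"
    using seq_monosub by blast
  consider "incseq (\<lambda>n. s (r n))" | "decseq (\<lambda>n. s (r n))"
    using mono monoseq_iff by blast
  then show ?thesis
  proof cases
    case 1
    then show ?thesis using r by (auto simp: comp_def)
  next
    case 2
    obtain n0 where least: "\<And>n. s (r n0) \<le> s (r n)"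
      using ex_has_least_nat[of "\<lambda>_. True" 0 "\<lambda>n. s (r n)"] by blast
    have const: "s (r (n + n0)) = s (r n0)" for n
      using 2 least[of "n + n0"] by (auto simp: decseq_def intro: antisym)
    have "strict_mono (r \<circ> (\<lambda>n. n + n0))"
      using r by (rule strict_mono_o) (simp add: strict_mono_def)
    moreover have "incseq (s \<circ> (r \<circ> (\<lambda>n. n + n0)))"
      by (simp add: incseq_def const)
    ultimately show ?thesis by blast
  qed
qed

lemma dickson_subseq:
  fixes f :: "nat \<Rightarrow> 'k \<Rightarrow> nat"
  assumes "finite K"
  shows "\<exists>r. strict_mono r \<and> (\<forall>k\<in>K. incseq (\<lambda>n. f (r n) k))"
  using assms
proof (induction K rule: finite_induct)
  case empty
  show ?case using strict_mono_id by blast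
next
  case (insert a K)
  then obtain r where r: "strict_mono r" and incK: "\<forall>k\<in>K. incseq (\<lambda>n. f (r n) k)"
    by blast
  obtain q where q: "strict_mono q" and inca: "incseq ((\<lambda>n. f (r n) a) \<circ> q)"
    using nat_seq_incseq_subseq by blast
  have "incseq (\<lambda>n. f (r (q n)) k)" if "k \<in> K" for k
    using incK that strict_mono_mono[OF q] by (auto simp: incseq_def mono_def)
  then have "\<forall>k\<in>insert a K. incseq (\<lambda>n. f ((r \<circ> q) n) k)"
    using inca by (auto simp: comp_def)
  then show ?case using strict_mono_o[OF r q] by blast
qed

lemma finite_antichain_fun_nat:
  fixes A :: "('k::finite \<Rightarrow> nat) set"
  assumes antichain: "\<And>x y. x \<in> A \<Longrightarrow> y \<in> A \<Longrightarrow> x \<le> y \<Longrightarrow> x = y"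
  shows "finite A"
proof (rule ccontr)
  assume "infinite A"
  then obtain f :: "nat \<Rightarrow> 'k \<Rightarrow> nat" where f: "inj f" "range f \<subseteq> A"
    by (auto simp: infinite_iff_countable_subset)
  obtain r where r: "strict_mono r" and inc: "\<forall>k\<in>UNIV. incseq (\<lambda>n. f (r n) k)"
    using dickson_subseq[of UNIV f] by auto
  have "f (r 0) \<le> f (r 1)"
    using inc by (auto simp: le_fun_def incseq_def)
  then have "f (r 0) = f (r 1)"
    using f(2) antichain by blast
  moreover have "r 0 < r 1"
    using r by (simp add: strict_mono_less)
  ultimately show False
    using f(1) by (simp add: inj_eq)
qed

section \<open>Atoms of a monoid embedded in \<open>\<nat>^k\<close>\<close>

definition atoms :: "'a::monoid_add set \<Rightarrow> 'a set" where
  "atoms P = {x \<in> P. x \<noteq> 0 \<and> \<not> (\<exists>y\<in>P. \<exists>z\<in>P. y \<noteq> 0 \<and> z \<noteq> 0 \<and> x = y + z)}"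

lemma finite_atoms:
  fixes \<phi> :: "'a::monoid_add \<Rightarrow> 'k::finite \<Rightarrow> nat"
  assumes inj: "inj_on \<phi> P"
    and le_imp_summand: "\<And>x y. x \<in> P \<Longrightarrow> y \<in> P \<Longrightarrow> \<phi> x \<le> \<phi> y \<Longrightarrow> \<exists>z\<in>P. y = x + z"
  shows "finite (atoms P)"
proof -
  have "finite (\<phi> ` atoms P)"
  proof (rule finite_antichain_fun_nat)
    fix a b assume "a \<in> \<phi> ` atoms P" "b \<in> \<phi> ` atoms P" "a \<le> b"
    then obtain x y where xy: "x \<in> atoms P" "y \<in> atoms P" "a = \<phi> x" "b = \<phi> y" "\<phi> x \<le> \<phi> y"
      by blast
    then obtain z where "z \<in> P" "y = x + z"
      using le_imp_summand[of x y] by (auto simp: atoms_def)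
    with xy have "z = 0"
      by (auto simp: atoms_def)
    then show "a = b" using \<open>y = x + z\<close> xy by simp
  qed
  moreover have "inj_on \<phi> (atoms P)"
    using inj by (rule inj_on_subset) (auto simp: atoms_def)
  ultimately show ?thesis by (rule finite_imageD)
qed

lemma ex_sum_mset_atoms:
  fixes s :: "'a::comm_monoid_add \<Rightarrow> nat"
  assumes size_pos: "\<And>x. x \<in> P \<Longrightarrow> x \<noteq> 0 \<Longrightarrow> 0 < s x"
    and size_add: "\<And>x y. x \<in> P \<Longrightarrow> y \<in> P \<Longrightarrow> s (x + y) = s x + s y"
    and "x \<in> P"
  shows "\<exists>M. set_mset M \<subseteq> atoms P \<and> sum_mset M = x"
  using \<open>x \<in> P\<close>
proof (induction "s x" arbitrary: x rule: less_induct)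
  case less
  show ?case
  proof (cases "x = 0 \<or> x \<in> atoms P")
    case True
    then show ?thesis
      by (elim disjE; intro exI[of _ "{#}"] exI[of _ "{#x#}"]) auto
  next
    case False
    then obtain y z where yz: "y \<in> P" "z \<in> P" "y \<noteq> 0" "z \<noteq> 0" "x = y + z"
      using less.prems by (auto simp: atoms_def)
    then have "s y < s x" "s z < s x"
      using size_add size_pos by fastforce+
    then obtain My Mz where "set_mset My \<subseteq> atoms P" "sum_mset My = y"
      "set_mset Mz \<subseteq> atoms P" "sum_mset Mz = z"
      using less.hyps yz by meson
    then show ?thesis
      using yz by (intro exI[of _ "My + Mz"]) auto
  qed
qed

lemma ord_at_add: "ord_at w (f + g) x = ord_at w f x + ord_at w g x"
  unfolding ord_at_def by (simp add: sum.distrib[symmetric] algebra_simps)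

lemma ord_at_diff: "ord_at w (f - g) x = ord_at w f x - ord_at w g x"
  unfolding ord_at_def by (simp add: sum_subtractf[symmetric] algebra_simps)

lemma ord_at_diff_const: "ord_at w (\<lambda>v. f v - c) x = ord_at w f x"
  unfolding ord_at_def by (simp add: algebra_simps)

lemma harmonic_imp_constant:
  assumes conn: "connected_graph w" and harmonic: "\<And>x. ord_at w h x = 0"
  shows "h a = h b"
proof -
  have "Max (range h) \<in> range h"
    by (rule Max_in) auto
  then obtain x0 where "h x0 = Max (range h)"
    by (metis rangeE)
  then have max: "h y \<le> h x0" for y
    by simp
  have all: "h y = h x0" for y
  proof -
    have "(x0, y) \<in> {(a, b). w a b > 0}\<^sup>*"
      using conn unfolding connected_graph_def by blast
    then show ?thesis
    proof (induction rule: rtrancl_induct)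
      case base
      show ?case ..
    next
      case (step y z)
      \<comment> \<open>maximum principle: at a maximum of h the summands of -ord_y(h) are \<ge> 0 and add up to 0\<close>
      have nonneg: "0 \<le> int (w y u) * (h y - h u)" for u
        using max[of u] step.IH by simp
      have "(\<Sum>u\<in>UNIV. int (w y u) * (h y - h u)) = - ord_at w h y"
        by (simp add: ord_at_def sum_negf[symmetric] algebra_simps)
      then have "int (w y z) * (h y - h z) = 0"
        using harmonic[of y] sum_nonneg_eq_0_iff[of UNIV "\<lambda>u. int (w y u) * (h y - h u)"] nonneg by simp
      then show ?case using step by simp
    qed
  qed
  show ?thesis
    using all[of a] all[of b] by simp
qed

definition graded_div :: "('v::finite \<Rightarrow> 'v \<Rightarrow> nat) \<Rightarrow> ('v \<Rightarrow> int) \<Rightarrow> nat \<times> ('v \<Rightarrow> int) \<Rightarrow> 'v \<Rightarrow> int"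
  where "graded_div w D x v = int (fst x) * D v + ord_at w (snd x) v"

lemma homog_iff_graded_div_nonneg: "x \<in> homog w D \<longleftrightarrow> (\<forall>v. 0 \<le> graded_div w D x v)"
  by (cases x) (auto simp: homog_def Rspace_def graded_div_def)

lemma graded_div_add: "graded_div w D (x + y) v = graded_div w D x v + graded_div w D y v"
  by (simp add: graded_div_def ord_at_add algebra_simps)

lemma graded_div_diff:
  "fst y \<le> fst x \<Longrightarrow> graded_div w D (x - y) v = graded_div w D x v - graded_div w D y v"
  by (simp add: graded_div_def ord_at_diff of_nat_diff algebra_simps)

section \<open>The monoid of homogeneous elements vanishing at a base vertex\<close>

definition based_homog :: "('v::finite \<Rightarrow> 'v \<Rightarrow> nat) \<Rightarrow> ('v \<Rightarrow> int) \<Rightarrow> 'v \<Rightarrow> (nat \<times> ('v \<Rightarrow> int)) set"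
  where "based_homog w D v0 = {x \<in> homog w D. snd x v0 = 0}"

definition div_coords :: "('v::finite \<Rightarrow> 'v \<Rightarrow> nat) \<Rightarrow> ('v \<Rightarrow> int) \<Rightarrow> nat \<times> ('v \<Rightarrow> int) \<Rightarrow> 'v option \<Rightarrow> nat"
  where "div_coords w D x k = (case k of None \<Rightarrow> fst x | Some v \<Rightarrow> nat (graded_div w D x v))"

lemma zero_in_based_homog: "0 \<in> based_homog w D v0"
  by (simp add: based_homog_def homog_iff_graded_div_nonneg graded_div_def ord_at_def)

lemma div_coords_add:
  assumes "x \<in> based_homog w D v0" "y \<in> based_homog w D v0"
  shows "div_coords w D (x + y) = div_coords w D x + div_coords w D y"
  using assms
  by (auto simp: fun_eq_iff div_coords_def graded_div_add nat_add_distrib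
      based_homog_def homog_iff_graded_div_nonneg split: option.split)

lemma div_coords_le_imp_summand:
  assumes P: "x \<in> based_homog w D v0" "y \<in> based_homog w D v0"
    and le: "div_coords w D x \<le> div_coords w D y"
  shows "\<exists>z\<in>based_homog w D v0. y = x + z"
proof
  have deg: "fst x \<le> fst y"
    using le_funD[OF le, of None] by (simp add: div_coords_def)
  have "graded_div w D x v \<le> graded_div w D y v" for v
    using le_funD[OF le, of "Some v"] P nat_le_eq_zle
    by (auto simp: div_coords_def based_homog_def homog_iff_graded_div_nonneg)
  then show "y - x \<in> based_homog w D v0"
    using P deg by (simp add: based_homog_def homog_iff_graded_div_nonneg graded_div_diff)
  show "y = x + (y - x)"
    using deg by (simp add: prod_eq_iff)
qed

lemma inj_on_div_coords:
  assumes "connected_graph w"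
  shows "inj_on (div_coords w D) (based_homog w D v0)"
proof (rule inj_onI)
  fix x y assume P: "x \<in> based_homog w D v0" "y \<in> based_homog w D v0"
    and eq: "div_coords w D x = div_coords w D y"
  have deg: "fst x = fst y"
    using fun_cong[OF eq, of None] by (simp add: div_coords_def)
  have "graded_div w D x v = graded_div w D y v" for v
    using fun_cong[OF eq, of "Some v"] P eq_nat_nat_iff
    by (auto simp: div_coords_def based_homog_def homog_iff_graded_div_nonneg)
  then have "ord_at w (snd x - snd y) v = 0" for v
    using deg by (simp add: graded_div_def ord_at_diff)
  then have "(snd x - snd y) u = (snd x - snd y) v0" for u
    by (rule harmonic_imp_constant[OF assms])
  then have "snd x = snd y"
    using P by (auto simp: based_homog_def)
  then show "x = y"
    using deg by (simp add: prod_eq_iff)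
qed

lemma based_homog_ex_sum_mset_atoms:
  assumes "connected_graph w" and "x \<in> based_homog w D v0"
  shows "\<exists>M. set_mset M \<subseteq> atoms (based_homog w D v0) \<and> sum_mset M = x"
proof (rule ex_sum_mset_atoms[where s = "\<lambda>x. \<Sum>k\<in>UNIV. div_coords w D x k"])
  fix x assume "x \<in> based_homog w D v0" "x \<noteq> 0"
  moreover have "div_coords w D 0 = 0"
    by (simp add: fun_eq_iff div_coords_def graded_div_def ord_at_def split: option.split)
  ultimately have "div_coords w D x \<noteq> 0"
    using inj_on_div_coords[OF assms(1)] zero_in_based_homog by (metis inj_onD)
  then obtain k where "div_coords w D x k \<noteq> 0"
    by (auto simp: fun_eq_iff)
  then show "0 < (\<Sum>k\<in>UNIV. div_coords w D x k)"
    using member_le_sum[of k UNIV "div_coords w D x"] by simp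
qed (use assms in \<open>auto simp: div_coords_add sum.distrib\<close>)

lemma trop_prod_eq_sum_mset:
  "trop_prod_deg M = fst (sum_mset M)" "trop_prod_fun M = snd (sum_mset M)"
  by (induction M) (auto simp: trop_prod_deg_def trop_prod_fun_def fun_eq_iff)

theorem theorem3p7:
  fixes w :: "'v::finite \<Rightarrow> 'v \<Rightarrow> nat" and D :: "'v \<Rightarrow> int"
  assumes "symmetric_graph w" and "connected_graph w"
  shows "fin_gen_graded w D"
proof -
  define v0 :: 'v where "v0 = undefined"
  define S where "S = atoms (based_homog w D v0)"
  have "finite S"
    unfolding S_def using inj_on_div_coords[OF assms(2)] div_coords_le_imp_summand
    by (rule finite_atoms)
  moreover have "S \<subseteq> homog w D"
    by (auto simp: S_def atoms_def based_homog_def)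
  moreover have "\<exists>T. T \<noteq> [] \<and> (\<forall>(c, M)\<in>set T. set_mset M \<subseteq> S \<and> trop_prod_deg M = m) \<and>
      (\<forall>x. f x = Max ((\<lambda>(c, M). c + trop_prod_fun M x) ` set T))"
    if "(m, f) \<in> homog w D" for m f
  proof -
    have "(m, \<lambda>v. f v - f v0) \<in> based_homog w D v0"
      using that by (simp add: based_homog_def homog_iff_graded_div_nonneg graded_div_def
          ord_at_diff_const)
    then obtain M where "set_mset M \<subseteq> S" "sum_mset M = (m, \<lambda>v. f v - f v0)"
      using based_homog_ex_sum_mset_atoms[OF assms(2)] unfolding S_def by blast
    then show ?thesis
      by (intro exI[of _ "[(f v0, M)]"]) (auto simp: trop_prod_eq_sum_mset)
  qed
  ultimately show ?thesis
    unfolding fin_gen_graded_def by blast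
qed

end
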